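(* Let $\mathcal{P}_1=\{AABB,ABAB\}$ and $\mathcal{P}_2=\{AABB,ABBA\}$. For each $i\in\{1,2\}$ there are constants $0<c<C$ such that a.a.s. $c\,n^{1/2}\le z_{\mathcal{P}_i}(\mathbb{RM}^{(2)}_{n})\le C\,n^{1/2}$.
   Context: An ordered $2$-matching of size $n$ is a set of $n$ pairwise disjoint $2$-element subsets (edges) of the ordered set $[2n]$ covering it; $\mathbb{RM}^{(2)}_n$ is such a matching chosen uniformly at random. Matchings are written as words (each edge gets a letter, each vertex replaced by its edge's letter), and $AABB, ABAB, ABBA$ are the three $2$-patterns (ordered matchings of size 2). Two edges form a pattern if they induce a matching order-isomorphic to it. For a set $\mathcal P$ of patterns, a $\mathcal P$-clique is a matching all of whose pairs of edges form patterns in $\mathcal P$, and $z_{\mathcal P}(M)$ is the largest size of a $\mathcal P$-clique contained in $M$. "A.a.s." means with probability tending to 1 as $n\to\infty$. *)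

theory Defs
  imports "HOL-Probability.Probability"
begin

definition ordered_matching :: "nat \<Rightarrow> nat set set \<Rightarrow> bool" where
  "ordered_matching n M \<longleftrightarrow>
     (\<forall>e\<in>M. card e = 2 \<and> e \<subseteq> {1..2*n}) \<and>
     (\<forall>e\<in>M. \<forall>f\<in>M. e \<noteq> f \<longrightarrow> e \<inter> f = {}) \<and>
     \<Union>M = {1..2*n}"

definition matchings :: "nat \<Rightarrow> nat set set set" where
  "matchings n = {M. ordered_matching n M}"

datatype pattern = AABB | ABAB | ABBA

text \<open>Edge e (the A-edge, with the smaller left endpoint) and edge f (the B-edge)
  induce the given pattern.\<close>
fun induces :: "pattern \<Rightarrow> nat set \<Rightarrow> nat set \<Rightarrow> bool" where
  "induces AABB e f \<longleftrightarrow> Max e < Min f"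
| "induces ABAB e f \<longleftrightarrow> Min e < Min f \<and> Min f < Max e \<and> Max e < Max f"
| "induces ABBA e f \<longleftrightarrow> Min e < Min f \<and> Max f < Max e"

definition forms_pattern_in :: "pattern set \<Rightarrow> nat set \<Rightarrow> nat set \<Rightarrow> bool" where
  "forms_pattern_in P e f \<longleftrightarrow> (\<exists>p\<in>P. induces p e f \<or> induces p f e)"

definition is_clique :: "pattern set \<Rightarrow> nat set set \<Rightarrow> bool" where
  "is_clique P K \<longleftrightarrow> (\<forall>e\<in>K. \<forall>f\<in>K. e \<noteq> f \<longrightarrow> forms_pattern_in P e f)"

definition z :: "pattern set \<Rightarrow> nat set set \<Rightarrow> nat" where
  "z P M = Max {card K | K. K \<subseteq> M \<and> is_clique P K}"

definition RM :: "nat \<Rightarrow> nat set set pmf" where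
  "RM n = pmf_of_set (matchings n)"

end

theory Submission
  imports Defs
begin

text \<open>For \<open>P\<close> one of \<open>{AABB, ABAB}\<close>, \<open>{AABB, ABBA}\<close> and \<open>{ABBA}\<close>, a \<open>P\<close>-clique is determined by
  its sets of left and right endpoints. Hence \<open>[2n]\<close> carries at most \<open>C(2n, k)\<^sup>2\<close> such cliques of
  size \<open>k\<close>, each contained in a \<open>(2n - 2k - 1)!! / (2n - 1)!! \<le> n\<^sup>-\<^sup>k\<close> fraction of all matchings,
  and the union bound makes a clique of size \<open>8\<surd>n\<close> unlikely.

  Conversely, "both endpoints further left" partially orders the edges of a matching; its chains
  are \<open>{AABB, ABAB}\<close>-cliques and its antichains are \<open>{ABBA}\<close>-cliques, so Mirsky's theorem gives
  \<open>n \<le> z{AABB, ABAB} \<cdot> z{ABBA}\<close>. As \<open>{ABBA} \<subseteq> {AABB, ABBA}\<close>, the upper bounds for the three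
  clique numbers yield both lower bounds.\<close>

section \<open>Perfect matchings\<close>

definition matching :: "'a set set \<Rightarrow> bool" where
  "matching K \<longleftrightarrow> (\<forall>e\<in>K. card e = 2) \<and> pairwise disjnt K"

definition perfect_matchings :: "'a set \<Rightarrow> 'a set set set" where
  "perfect_matchings S = {M. matching M \<and> \<Union>M = S}"

text \<open>\<open>odd_double_fact m\<close> is \<open>(2m - 1)!!\<close>.\<close>
fun odd_double_fact :: "nat \<Rightarrow> nat" where
  "odd_double_fact 0 = 1"
| "odd_double_fact (Suc m) = (2 * m + 1) * odd_double_fact m"

lemma odd_double_fact_pos: "0 < odd_double_fact m"
  by (induction m) auto

lemma odd_double_fact_add_ge: "(2 * m + 1) ^ k * odd_double_fact m \<le> odd_double_fact (m + k)"
proof (induction k)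
  case (Suc k)
  have "(2 * m + 1) ^ Suc k * odd_double_fact m
      = (2 * m + 1) * ((2 * m + 1) ^ k * odd_double_fact m)"
    by (simp only: power_Suc mult.assoc)
  also have "\<dots> \<le> (2 * (m + k) + 1) * odd_double_fact (m + k)"
    using Suc.IH by (intro mult_mono) auto
  finally show ?case by simp
qed simp

lemma matching_subset: "matching M \<Longrightarrow> K \<subseteq> M \<Longrightarrow> matching K"
  by (auto simp: matching_def pairwise_subset)

lemma matching_edge_card: "matching K \<Longrightarrow> e \<in> K \<Longrightarrow> card e = 2"
  by (simp add: matching_def)

lemma matching_disjoint: "matching K \<Longrightarrow> e \<in> K \<Longrightarrow> f \<in> K \<Longrightarrow> e \<noteq> f \<Longrightarrow> e \<inter> f = {}"
  by (auto simp: matching_def pairwise_def disjnt_def)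

lemma card_Union_matching:
  assumes "matching K"
  shows "card (\<Union>K) = 2 * card K"
proof -
  have "card (\<Union>K) = (\<Sum>e\<in>K. card e)"
    using assms by (intro card_Union_disjoint) (auto simp: matching_def card_ge_0_finite)
  also have "\<dots> = 2 * card K"
    using assms by (simp add: matching_def)
  finally show ?thesis .
qed

lemma finite_perfect_matchings: "finite S \<Longrightarrow> finite (perfect_matchings S)"
  by (rule finite_subset[of _ "Pow (Pow S)"]) (auto simp: perfect_matchings_def)

lemma perfect_matchings_empty: "perfect_matchings {} = {{}}"
  by (fastforce simp: perfect_matchings_def matching_def)

lemma perfect_matchings_split:
  assumes "x \<in> S"
  shows "perfect_matchings S = (\<Union>y\<in>S - {x}. insert {x, y} ` perfect_matchings (S - {x, y}))"
proof (intro equalityI subsetI)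
  fix M assume M: "M \<in> perfect_matchings S"
  then obtain e where e: "e \<in> M" "x \<in> e"
    using assms by (auto simp: perfect_matchings_def)
  moreover have "card e = 2"
    using M e by (auto simp: perfect_matchings_def matching_def)
  ultimately obtain y where y: "e = {x, y}" "y \<noteq> x"
    by (auto simp: card_Suc_eq numeral_2_eq_2)
  have disj: "f \<inter> e = {}" if "f \<in> M" "f \<noteq> e" for f
    using M e(1) that matching_disjoint[of M f e] by (auto simp: perfect_matchings_def)
  have "M - {e} \<in> perfect_matchings (S - {x, y})"
    using M e y disj by (auto simp: perfect_matchings_def intro: matching_subset)
  moreover have "y \<in> S - {x}" and "M = insert {x, y} (M - {e})"
    using M e y by (auto simp: perfect_matchings_def)
  ultimately show "M \<in> (\<Union>y\<in>S - {x}. insert {x, y} ` perfect_matchings (S - {x, y}))"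
    using y by blast
next
  fix M assume "M \<in> (\<Union>y\<in>S - {x}. insert {x, y} ` perfect_matchings (S - {x, y}))"
  then obtain y M' where y: "y \<in> S" "y \<noteq> x"
    and M': "matching M'" "\<Union>M' = S - {x, y}" "M = insert {x, y} M'"
    by (auto simp: perfect_matchings_def)
  have "disjnt {x, y} f" if "f \<in> M'" for f
    using M' that by (auto simp: disjnt_def)
  then have "matching M"
    using M' y by (auto simp: matching_def pairwise_insert disjnt_sym)
  then show "M \<in> perfect_matchings S"
    using M' y assms by (auto simp: perfect_matchings_def)
qed

lemma card_perfect_matchings:
  "finite S \<Longrightarrow> card S = 2 * m \<Longrightarrow> card (perfect_matchings S) = odd_double_fact m"
proof (induction m arbitrary: S)
  case 0
  then show ?case by (simp add: perfect_matchings_empty)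
next
  case (Suc m)
  then obtain x where x: "x \<in> S" by fastforce
  let ?N = "\<lambda>y. insert {x, y} ` perfect_matchings (S - {x, y})"
  have x_free: "x \<notin> \<Union>M" if "M \<in> perfect_matchings (S - {x, y})" for y M
    using that by (auto simp: perfect_matchings_def)
  then have fresh: "{x, y} \<notin> M" if "M \<in> perfect_matchings (S - {x, y})" for y M
    using that by blast
  have card_N: "card (?N y) = odd_double_fact m" if y: "y \<in> S - {x}" for y
  proof -
    have "inj_on (insert {x, y}) (perfect_matchings (S - {x, y}))"
      by (rule inj_onI) (metis Diff_insert_absorb fresh)
    then have "card (?N y) = card (perfect_matchings (S - {x, y}))"
      by (rule card_image)
    also have "\<dots> = odd_double_fact m"
      using Suc.prems x y by (intro Suc.IH) (auto simp: card_Diff_subset)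
    finally show ?thesis .
  qed
  have disjoint_N: "?N y \<inter> ?N y' = {}" if "y \<noteq> y'" for y y'
  proof (rule ccontr)
    assume "?N y \<inter> ?N y' \<noteq> {}"
    then obtain M M' where M': "M' \<in> perfect_matchings (S - {x, y'})"
      and eq: "insert {x, y} M = insert {x, y'} M'"
      by blast
    have "{x, y} \<in> M'"
      using eq \<open>y \<noteq> y'\<close> by (metis doubleton_eq_iff insertI1 insertE)
    then show False
      using x_free[OF M'] by blast
  qed
  have "card (perfect_matchings S) = (\<Sum>y\<in>S - {x}. card (?N y))"
    unfolding perfect_matchings_split[OF x]
    using Suc.prems disjoint_N by (intro card_UN_disjoint) (auto simp: finite_perfect_matchings)
  also have "\<dots> = (2 * m + 1) * odd_double_fact m"
    using Suc.prems x card_N by simp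
  finally show ?case by simp
qed

lemma card_perfect_matchings_containing_le:
  assumes "matching K" "\<Union>K \<subseteq> S" "finite S"
  shows "card {M \<in> perfect_matchings S. K \<subseteq> M} \<le> card (perfect_matchings (S - \<Union>K))"
proof -
  have "inj_on (\<lambda>M. M - K) {M \<in> perfect_matchings S. K \<subseteq> M}"
    by (rule inj_onI) blast
  moreover have "M - K \<in> perfect_matchings (S - \<Union>K)" if "M \<in> perfect_matchings S" "K \<subseteq> M" for M
  proof -
    have "e \<inter> f = {}" if "e \<in> M - K" "f \<in> K" for e f
      using that \<open>M \<in> perfect_matchings S\<close> \<open>K \<subseteq> M\<close> matching_disjoint[of M e f]
      by (auto simp: perfect_matchings_def)
    then show ?thesis
      using that by (auto simp: perfect_matchings_def intro: matching_subset)
  qed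
  ultimately show ?thesis
    using assms(3) by (intro card_inj_on_le) (auto simp: finite_perfect_matchings)
qed

lemma matchings_eq_perfect_matchings: "matchings n = perfect_matchings {1..2 * n}"
  by (auto simp: matchings_def ordered_matching_def perfect_matchings_def matching_def
      pairwise_def disjnt_def)

lemma finite_matchings: "finite (matchings n)"
  by (simp add: matchings_eq_perfect_matchings finite_perfect_matchings)

lemma card_matchings: "card (matchings n) = odd_double_fact n"
  by (simp add: matchings_eq_perfect_matchings card_perfect_matchings)

lemma matching_if_in_matchings: "M \<in> matchings n \<Longrightarrow> matching M"
  by (simp add: matchings_eq_perfect_matchings perfect_matchings_def)

lemma finite_if_in_matchings: "M \<in> matchings n \<Longrightarrow> finite M"
  by (rule finite_subset[of _ "Pow {1..2 * n}"]) (auto simp: matchings_def ordered_matching_def)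

lemma Union_if_in_matchings: "M \<in> matchings n \<Longrightarrow> \<Union>M = {1..2 * n}"
  by (simp add: matchings_def ordered_matching_def)

lemma card_if_in_matchings: "M \<in> matchings n \<Longrightarrow> card M = n"
  using card_Union_matching[of M]
  by (simp add: matchings_eq_perfect_matchings perfect_matchings_def)

lemma card_matchings_containing_le:
  assumes "matching K" "card K = k" "\<Union>K \<subseteq> {1..2 * n}"
  shows "card {M \<in> matchings n. K \<subseteq> M} \<le> odd_double_fact (n - k)"
proof -
  have "card ({1..2 * n} - \<Union>K) = 2 * (n - k)"
    using assms card_Union_matching[OF assms(1)] by (simp add: card_Diff_subset finite_subset)
  then show ?thesis
    using card_perfect_matchings_containing_le[OF assms(1,3)]
    by (simp add: matchings_eq_perfect_matchings card_perfect_matchings)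
qed

section \<open>Cliques are determined by their endpoints\<close>

lemma card_2_Min_Max:
  assumes "card (e :: nat set) = 2"
  shows "Min e < Max e" "e = {Min e, Max e}"
proof -
  obtain a b where "e = {a, b}" "a \<noteq> b"
    using assms by (auto simp: card_Suc_eq numeral_2_eq_2)
  then show "Min e < Max e" "e = {Min e, Max e}"
    by (auto simp: insert_commute)
qed

lemma disjoint_edges_endpoints_distinct:
  assumes "card (e :: nat set) = 2" "card f = 2" "e \<inter> f = {}"
  shows "Min e \<noteq> Min f" "Min e \<noteq> Max f" "Max e \<noteq> Min f" "Max e \<noteq> Max f"
  using assms card_2_Min_Max[OF assms(1)] card_2_Min_Max[OF assms(2)]
  by (metis disjoint_iff insertI1 insertI2)+

lemma matching_endpoints_distinct:
  assumes "matching (K :: nat set set)" "e \<in> K" "f \<in> K" "e \<noteq> f"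
  shows "Min e \<noteq> Min f" "Max e \<noteq> Max f"
  using disjoint_edges_endpoints_distinct matching_edge_card matching_disjoint assms by metis+

lemma inj_on_Min_matching: "matching (K :: nat set set) \<Longrightarrow> inj_on Min K"
  by (meson inj_onI matching_endpoints_distinct(1))

lemma inj_on_Max_matching: "matching (K :: nat set set) \<Longrightarrow> inj_on Max K"
  by (meson inj_onI matching_endpoints_distinct(2))

abbreviation "P1 \<equiv> {AABB, ABAB}"
abbreviation "P2 \<equiv> {AABB, ABBA}"
abbreviation "P_nested \<equiv> {ABBA}"

text \<open>Write \<open>e = (a, b)\<close>, \<open>e' = (a, b')\<close>, \<open>f' = (c, b)\<close> and \<open>f = (c, d)\<close> with \<open>b < b'\<close>. For each
  of the three pattern sets, the pair \<open>e', f'\<close> decides on which side of \<open>a\<close> the point \<open>c\<close> lies,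
  and then the pair \<open>e, f\<close> forces \<open>d < b\<close>. Iterating this descent on \<open>b\<close> shows that two cliques
  with the same endpoints agree.\<close>
lemma clique_exchange:
  assumes P: "P \<in> {P1, P2, P_nested}"
    and K: "matching K" "is_clique P K" "e \<in> K" "f \<in> K"
    and K': "matching K'" "is_clique P K'" "e' \<in> K'" "f' \<in> K'"
    and ends: "Min e = Min e'" "Min f = Min f'" "Max f' = Max e" "Max e < Max e'"
  shows "Max f < Max e"
proof -
  have "f' \<noteq> e'"
    using ends by auto
  then have "Min f' \<noteq> Min e'" "e' \<inter> f' = {}"
    using K' matching_endpoints_distinct matching_disjoint by metis+
  then have "f \<noteq> e"
    using ends by auto
  then have "Max f \<noteq> Max e" "Min f \<noteq> Max e" "e \<inter> f = {}"
    using K matching_endpoints_distinct matching_disjoint disjoint_edges_endpoints_distinct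
      matching_edge_card by metis+
  moreover have "forms_pattern_in P e' f'" "forms_pattern_in P e f"
    using K K' \<open>f' \<noteq> e'\<close> \<open>f \<noteq> e\<close> by (auto simp: is_clique_def)
  moreover have "Min e < Max e" "Min f < Max f" "Min f' < Max f'"
    using K K' card_2_Min_Max matching_edge_card by metis+
  ultimately show ?thesis
    using P \<open>Min f' \<noteq> Min e'\<close> ends by (auto simp: forms_pattern_in_def)
qed

lemma clique_partner_not_longer:
  assumes P: "P \<in> {P1, P2, P_nested}"
    and K: "matching K" "is_clique P K" and K': "matching K'" "is_clique P K'"
    and ends: "Min ` K' \<subseteq> Min ` K" "Max ` K \<subseteq> Max ` K'"
  shows "e \<in> K \<Longrightarrow> e' \<in> K' \<Longrightarrow> Min e = Min e' \<Longrightarrow> \<not> Max e < Max e'"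
proof (induction "Max e" arbitrary: e e' rule: less_induct)
  case less
  show ?case
  proof
    assume longer: "Max e < Max e'"
    have "Max e \<in> Max ` K'"
      using ends(2) \<open>e \<in> K\<close> by (rule subsetD[OF _ imageI])
    then obtain f' where f': "f' \<in> K'" "Max f' = Max e"
      by (metis imageE)
    have "Min f' \<in> Min ` K"
      using ends(1) f'(1) by (rule subsetD[OF _ imageI])
    then obtain f where f: "f \<in> K" "Min f = Min f'"
      by (metis imageE)
    have "Max f < Max e"
      using clique_exchange[OF P K \<open>e \<in> K\<close> f(1) K' \<open>e' \<in> K'\<close> f'(1)] less.prems f f' longer
      by simp
    then show False
      using less.hyps[OF _ f(1) f'(1) f(2)] f'(2) by simp
  qed
qed

lemma clique_eq_if_same_endpoints:
  assumes P: "P \<in> {P1, P2, P_nested}"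
    and K: "matching K" "is_clique P K" and K': "matching K'" "is_clique P K'"
    and ends: "Min ` K = Min ` K'" "Max ` K = Max ` K'"
  shows "K = K'"
proof -
  have "K1 \<subseteq> K2"
    if K1: "matching K1" "is_clique P K1" and K2: "matching K2" "is_clique P K2"
      and ends: "Min ` K1 = Min ` K2" "Max ` K1 = Max ` K2" for K1 K2
  proof
    fix e assume e: "e \<in> K1"
    then obtain e' where e': "e' \<in> K2" "Min e = Min e'"
      using ends(1) by (metis imageE imageI)
    have "\<not> Max e < Max e'"
      using clique_partner_not_longer[OF P K1 K2 _ _ e e'] ends by simp
    moreover have "\<not> Max e' < Max e"
      using clique_partner_not_longer[OF P K2 K1 _ _ e'(1) e e'(2)[symmetric]] ends by simp
    ultimately have "Max e = Max e'"
      by simp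
    then have "e = e'"
      using e'(2) card_2_Min_Max(2) matching_edge_card e e' K1 K2 by metis
    then show "e \<in> K2"
      using e' by simp
  qed
  then show ?thesis
    using assms by (metis subset_antisym)
qed

lemma card_cliques_le:
  assumes P: "P \<in> {P1, P2, P_nested}" and "finite S"
  shows "card {K. matching K \<and> \<Union>K \<subseteq> S \<and> is_clique P K \<and> card K = k} \<le> (card S choose k) ^ 2"
proof -
  let ?Q = "{K. matching K \<and> \<Union>K \<subseteq> S \<and> is_clique P K \<and> card K = k}"
  let ?A = "{A. A \<subseteq> S \<and> card A = k}"
  have "inj_on (\<lambda>K. (Min ` K, Max ` K)) ?Q"
  proof (rule inj_onI)
    fix K K' assume "K \<in> ?Q" "K' \<in> ?Q" "(Min ` K, Max ` K) = (Min ` K', Max ` K')"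
    then show "K = K'"
      by (intro clique_eq_if_same_endpoints[OF P]) auto
  qed
  moreover have "Min ` K \<in> ?A \<and> Max ` K \<in> ?A" if "K \<in> ?Q" for K
  proof -
    have K: "matching K" "\<Union>K \<subseteq> S" "card K = k"
      using that by simp_all
    have "Min e \<in> S \<and> Max e \<in> S" if "e \<in> K" for e
      using K that card_2_Min_Max(2)[OF matching_edge_card]
      by (metis Union_upper insert_subset subset_trans)
    then show ?thesis
      using K by (auto simp: card_image inj_on_Min_matching inj_on_Max_matching)
  qed
  then have "(\<lambda>K. (Min ` K, Max ` K)) ` ?Q \<subseteq> ?A \<times> ?A"
    by blast
  moreover have "finite (?A \<times> ?A)"
    using \<open>finite S\<close> by simp
  ultimately have "card ?Q \<le> card (?A \<times> ?A)"
    by (intro card_inj_on_le)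
  also have "\<dots> = (card S choose k) ^ 2"
    using \<open>finite S\<close> by (simp add: card_cartesian_product n_subsets power2_eq_square)
  finally show ?thesis .
qed

section \<open>Clique numbers and Mirsky's theorem\<close>

lemma z_eq_Max_image: "z P M = Max (card ` {K. K \<subseteq> M \<and> is_clique P K})"
  unfolding z_def by (rule arg_cong[where f = Max]) blast

lemma finite_cliques: "finite M \<Longrightarrow> finite {K. K \<subseteq> M \<and> is_clique P K}"
  by (rule finite_subset[of _ "Pow M"]) auto

lemma card_le_z:
  assumes "finite M" "K \<subseteq> M" "is_clique P K"
  shows "card K \<le> z P M"
  unfolding z_eq_Max_image
  using assms finite_cliques[OF assms(1)] by (intro Max_ge) blast+

lemma z_attained:
  assumes "finite M"
  obtains K where "K \<subseteq> M" "is_clique P K" "card K = z P M"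
proof -
  have "is_clique P {}"
    by (simp add: is_clique_def)
  then have "card ` {K. K \<subseteq> M \<and> is_clique P K} \<noteq> {}"
    by blast
  then have "z P M \<in> card ` {K. K \<subseteq> M \<and> is_clique P K}"
    unfolding z_eq_Max_image using finite_cliques[OF assms] by (intro Max_in finite_imageI)
  then obtain K where "K \<subseteq> M" "is_clique P K" "z P M = card K"
    by blast
  then show ?thesis
    by (intro that) simp_all
qed

lemma clique_of_card_if_le_z:
  assumes "finite M" "k \<le> z P M"
  obtains K where "K \<subseteq> M" "is_clique P K" "card K = k"
proof -
  obtain K where K: "K \<subseteq> M" "is_clique P K" "card K = z P M"
    using z_attained[OF assms(1)] .
  obtain K' where "K' \<subseteq> K" "card K' = k"
    using obtain_subset_with_card_n[of k K] assms(2) K(3) by auto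
  moreover have "is_clique P K'"
    using K(2) \<open>K' \<subseteq> K\<close> by (auto simp: is_clique_def)
  ultimately show ?thesis
    using K(1) by (intro that[of K']) auto
qed

lemma z_mono:
  assumes "P \<subseteq> P'" "finite M"
  shows "z P M \<le> z P' M"
proof -
  obtain K where K: "K \<subseteq> M" "is_clique P K" "card K = z P M"
    using z_attained[OF assms(2)] .
  then have "is_clique P' K"
    using assms(1) unfolding is_clique_def forms_pattern_in_def by blast
  then show ?thesis
    using card_le_z[OF assms(2) K(1)] K(3) by simp
qed

text \<open>The height of \<open>x\<close>, the size of a longest chain with top \<open>x\<close>, grades the order.\<close>
lemma obtain_height_grading:
  fixes less :: "'a \<Rightarrow> 'a \<Rightarrow> bool"
  assumes A: "finite A" "transp_on A less" "irreflp_on A less"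
    and chain: "\<And>C. C \<subseteq> A \<Longrightarrow> (\<forall>x\<in>C. \<forall>y\<in>C. x \<noteq> y \<longrightarrow> less x y \<or> less y x) \<Longrightarrow> card C \<le> h"
  obtains height where "\<And>x. x \<in> A \<Longrightarrow> height x \<in> {1..h}"
    and "\<And>x y. x \<in> A \<Longrightarrow> y \<in> A \<Longrightarrow> less x y \<Longrightarrow> height x < height y"
proof -
  define chains_to where "chains_to x = {C. C \<subseteq> A \<and> x \<in> C \<and> (\<forall>c\<in>C. c = x \<or> less c x)
    \<and> (\<forall>c\<in>C. \<forall>d\<in>C. c \<noteq> d \<longrightarrow> less c d \<or> less d c)}" for x
  define height where "height x = Max (card ` chains_to x)" for x
  have "chains_to x \<subseteq> Pow A" for x
    by (auto simp: chains_to_def)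
  then have fin: "finite (card ` chains_to x)" for x
    using A(1) by (meson finite_Pow_iff finite_imageI finite_subset)
  have singleton: "{x} \<in> chains_to x" if "x \<in> A" for x
    using that by (simp add: chains_to_def)
  have height_ge: "card C \<le> height x" if "C \<in> chains_to x" for C x
    unfolding height_def using fin that by (intro Max_ge) simp_all
  have height_attained: "\<exists>C\<in>chains_to x. card C = height x" if "x \<in> A" for x
  proof -
    have "height x \<in> card ` chains_to x"
      unfolding height_def using fin singleton[OF that] by (intro Max_in) auto
    then show ?thesis
      by auto
  qed
  have "height x \<in> {1..h}" if x: "x \<in> A" for x
  proof -
    obtain C where C: "C \<in> chains_to x" "card C = height x"
      using height_attained[OF x] by auto
    have "card C \<le> h"
      using C(1) chain[of C] by (simp add: chains_to_def)
    then show ?thesis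
      using height_ge[OF singleton[OF x]] C(2) by simp
  qed
  moreover have "height x < height y" if "x \<in> A" "y \<in> A" "less x y" for x y
  proof -
    obtain C where C: "C \<in> chains_to x" "card C = height x"
      using height_attained \<open>x \<in> A\<close> by auto
    have below_y: "less c y" if "c \<in> C" for c
    proof -
      have "c \<in> A" "c = x \<or> less c x"
        using C(1) that by (auto simp: chains_to_def)
      then show ?thesis
        using transp_onD[OF A(2) _ \<open>x \<in> A\<close> \<open>y \<in> A\<close> _ \<open>less x y\<close>] \<open>less x y\<close> by blast
    qed
    then have "y \<notin> C"
      using irreflp_onD[OF A(3) \<open>y \<in> A\<close>] by blast
    moreover have "insert y C \<in> chains_to y"
      using C(1) below_y \<open>y \<in> A\<close> by (auto simp: chains_to_def)
    moreover have "finite C"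
      using C(1) A(1) by (auto simp: chains_to_def intro: finite_subset)
    ultimately show ?thesis
      using height_ge[of "insert y C" y] C(2) by simp
  qed
  ultimately show ?thesis
    by (rule that)
qed

text \<open>Mirsky's theorem: the level sets of the height are antichains.\<close>
lemma card_le_chain_mult_antichain:
  fixes less :: "'a \<Rightarrow> 'a \<Rightarrow> bool"
  assumes A: "finite A" "transp_on A less" "irreflp_on A less"
    and chain: "\<And>C. C \<subseteq> A \<Longrightarrow> (\<forall>x\<in>C. \<forall>y\<in>C. x \<noteq> y \<longrightarrow> less x y \<or> less y x) \<Longrightarrow> card C \<le> h"
    and antichain: "\<And>C. C \<subseteq> A \<Longrightarrow> (\<forall>x\<in>C. \<forall>y\<in>C. \<not> less x y) \<Longrightarrow> card C \<le> w"
  shows "card A \<le> h * w"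
proof -
  obtain height where height_range: "\<And>x. x \<in> A \<Longrightarrow> height x \<in> {1..h}"
    and height_less: "\<And>x y. x \<in> A \<Longrightarrow> y \<in> A \<Longrightarrow> less x y \<Longrightarrow> height x < height y"
    using obtain_height_grading[OF A chain] by metis
  have level_card: "card {x\<in>A. height x = j} \<le> w" for j
  proof (rule antichain)
    show "\<forall>x\<in>{x\<in>A. height x = j}. \<forall>y\<in>{x\<in>A. height x = j}. \<not> less x y"
      using height_less by (metis (mono_tags, lifting) mem_Collect_eq less_irrefl)
  qed blast
  have "A = (\<Union>j\<in>{1..h}. {x\<in>A. height x = j})"
    using height_range by auto
  then have "card A \<le> (\<Sum>j\<in>{1..h}. card {x\<in>A. height x = j})"
    using card_UN_le[of "{1..h}" "\<lambda>j. {x\<in>A. height x = j}"] by simp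
  also have "\<dots> \<le> h * w"
    using sum_bounded_above[of "{1..h}" "\<lambda>j. card {x\<in>A. height x = j}" w] level_card by simp
  finally show ?thesis .
qed

definition precedes :: "nat set \<Rightarrow> nat set \<Rightarrow> bool" where
  "precedes e f \<longleftrightarrow> Min e < Min f \<and> Max e < Max f"

lemma forms_pattern_in_P1_if_precedes:
  assumes "card e = 2" "card f = 2" "e \<inter> f = {}" "precedes e f"
  shows "forms_pattern_in P1 e f"
  using assms disjoint_edges_endpoints_distinct[OF assms(1-3)] card_2_Min_Max(1)[OF assms(1)]
  by (auto simp: forms_pattern_in_def precedes_def)

lemma forms_pattern_in_P_nested_if_incomparable:
  assumes "card e = 2" "card f = 2" "e \<inter> f = {}" "\<not> precedes e f" "\<not> precedes f e"
  shows "forms_pattern_in P_nested e f"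
  using assms disjoint_edges_endpoints_distinct[OF assms(1-3)]
  by (auto simp: forms_pattern_in_def precedes_def)

lemma card_matching_le_z_P1_mult_z_P_nested:
  assumes M: "matching M" "finite M"
  shows "card M \<le> z P1 M * z P_nested M"
proof (rule card_le_chain_mult_antichain[where less = precedes])
  show "transp_on M precedes" "irreflp_on M precedes"
    by (auto simp: transp_on_def irreflp_on_def precedes_def)
  fix C assume C: "C \<subseteq> M"
  then have edges: "card e = 2" "card f = 2" "e \<inter> f = {}" if "e \<in> C" "f \<in> C" "e \<noteq> f" for e f
    using M that matching_edge_card matching_disjoint by blast+
  have symmetric: "forms_pattern_in P e f \<longleftrightarrow> forms_pattern_in P f e" for P e f
    by (auto simp: forms_pattern_in_def)
  show "card C \<le> z P1 M" if "\<forall>x\<in>C. \<forall>y\<in>C. x \<noteq> y \<longrightarrow> precedes x y \<or> precedes y x"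
  proof (rule card_le_z[OF M(2) C])
    show "is_clique P1 C"
      unfolding is_clique_def
      using that edges forms_pattern_in_P1_if_precedes symmetric by metis
  qed
  show "card C \<le> z P_nested M" if "\<forall>x\<in>C. \<forall>y\<in>C. \<not> precedes x y"
  proof (rule card_le_z[OF M(2) C])
    show "is_clique P_nested C"
      unfolding is_clique_def
      using that edges forms_pattern_in_P_nested_if_incomparable by metis
  qed
qed (fact M(2))

section \<open>Large cliques are unlikely\<close>

lemma card_matchings_z_ge_le:
  assumes P: "P \<in> {P1, P2, P_nested}"
  shows "card {M \<in> matchings n. k \<le> z P M} \<le> (2 * n choose k) ^ 2 * odd_double_fact (n - k)"
proof -
  let ?Q = "{K. matching K \<and> \<Union>K \<subseteq> {1..2 * n} \<and> is_clique P K \<and> card K = k}"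
  have "{M \<in> matchings n. k \<le> z P M} \<subseteq> (\<Union>K\<in>?Q. {M \<in> matchings n. K \<subseteq> M})"
  proof clarify
    fix M assume M: "M \<in> matchings n" "k \<le> z P M"
    obtain K where K: "K \<subseteq> M" "is_clique P K" "card K = k"
      using clique_of_card_if_le_z[OF finite_if_in_matchings[OF M(1)] M(2)] .
    moreover have "matching K" "\<Union>K \<subseteq> {1..2 * n}"
      using K(1) matching_if_in_matchings[OF M(1)] Union_if_in_matchings[OF M(1)]
      by (auto intro: matching_subset)
    ultimately show "M \<in> (\<Union>K\<in>?Q. {M \<in> matchings n. K \<subseteq> M})"
      using M(1) by auto
  qed
  then have "card {M \<in> matchings n. k \<le> z P M} \<le> card (\<Union>K\<in>?Q. {M \<in> matchings n. K \<subseteq> M})"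
    by (intro card_mono) (auto intro: finite_subset[OF _ finite_matchings])
  also have "\<dots> \<le> (\<Sum>K\<in>?Q. card {M \<in> matchings n. K \<subseteq> M})"
    by (rule card_UN_le, rule finite_subset[of _ "Pow (Pow {1..2 * n})"]) auto
  also have "\<dots> \<le> (\<Sum>K\<in>?Q. odd_double_fact (n - k))"
    by (intro sum_mono card_matchings_containing_le) auto
  also have "\<dots> = card ?Q * odd_double_fact (n - k)"
    by simp
  also have "\<dots> \<le> (2 * n choose k) ^ 2 * odd_double_fact (n - k)"
    using card_cliques_le[OF P, of "{1..2 * n}" k] by (intro mult_right_mono) simp_all
  finally show ?thesis .
qed

lemma prob_z_ge_le:
  assumes P: "P \<in> {P1, P2, P_nested}" and k: "1 \<le> k" "2 * k \<le> n + 1"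
  shows "measure_pmf.prob (RM n) {M. k \<le> z P M} \<le> real ((2 * n choose k) ^ 2) / real n ^ k"
proof -
  have "n ^ k * odd_double_fact (n - k) \<le> (2 * (n - k) + 1) ^ k * odd_double_fact (n - k)"
    using k by (intro mult_right_mono power_mono) auto
  also have "\<dots> \<le> odd_double_fact n"
    using odd_double_fact_add_ge[of "n - k" k] k by simp
  finally have "real n ^ k * odd_double_fact (n - k) \<le> odd_double_fact n"
    by (simp flip: of_nat_mult of_nat_power)
  then have ratio: "real (odd_double_fact (n - k)) / odd_double_fact n \<le> 1 / real n ^ k"
    using k odd_double_fact_pos[of n] by (simp add: field_simps)
  have "matchings n \<noteq> {}"
    using card_matchings[of n] odd_double_fact_pos[of n] by auto
  then have "measure_pmf.prob (RM n) {M. k \<le> z P M}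
      = card (matchings n \<inter> {M. k \<le> z P M}) / card (matchings n)"
    unfolding RM_def by (rule measure_pmf_of_set[OF _ finite_matchings])
  also have "matchings n \<inter> {M. k \<le> z P M} = {M \<in> matchings n. k \<le> z P M}"
    by blast
  also have "real (card {M \<in> matchings n. k \<le> z P M}) / card (matchings n)
      \<le> real ((2 * n choose k) ^ 2 * odd_double_fact (n - k)) / odd_double_fact n"
    unfolding card_matchings
    using card_matchings_z_ge_le[OF P, of n k]
    by (intro divide_right_mono) (simp_all only: of_nat_le_iff of_nat_0_le_iff)
  also have "\<dots> = real ((2 * n choose k) ^ 2) * (real (odd_double_fact (n - k)) / odd_double_fact n)"
    by simp
  also have "\<dots> \<le> real ((2 * n choose k) ^ 2) * (1 / real n ^ k)"
    using ratio by (intro mult_left_mono) simp_all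
  finally show ?thesis
    by simp
qed

lemma pow_div_fact_le_exp:
  fixes x :: real
  assumes "0 \<le> x"
  shows "x ^ k / fact k \<le> exp x"
proof -
  have exp_sums: "(\<lambda>n. x ^ n / fact n) sums exp x"
    using exp_converges[of x] by (simp add: divide_inverse_commute)
  have "(\<Sum>n\<in>{k}. x ^ n / fact n) \<le> (\<Sum>n. x ^ n / fact n)"
    using exp_sums assms by (intro sum_le_suminf) (auto simp: sums_iff)
  then show ?thesis
    by (simp add: sums_unique[OF exp_sums])
qed

lemma binomial_le_exp_pow:
  assumes "1 \<le> k"
  shows "real (m choose k) \<le> (exp 1 * m / k) ^ k"
proof -
  have "real ((m choose k) * fact k) \<le> real (m ^ k)"
    using binomial_fact_pow[of m k] by (simp only: of_nat_le_iff)
  then have "real (m choose k) \<le> real m ^ k / fact k"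
    by (simp add: pos_le_divide_eq)
  also have "\<dots> \<le> real m ^ k / (real k ^ k / exp 1 ^ k)"
  proof (rule divide_left_mono)
    have "real k ^ k \<le> exp (real k) * fact k"
      using pow_div_fact_le_exp[of "real k" k] by (simp add: divide_le_eq)
    moreover have "exp (real k) = exp 1 ^ k"
      using exp_of_nat_mult[of k 1] by simp
    ultimately show "real k ^ k / exp 1 ^ k \<le> fact k"
      by (simp add: divide_le_eq mult.commute)
  qed (use assms in simp_all)
  also have "\<dots> = (exp 1 * m / k) ^ k"
    by (simp add: power_divide power_mult_distrib)
  finally show ?thesis .
qed

lemma binomial_sq_div_pow_le:
  assumes n: "1 \<le> n" and k: "64 * n \<le> k ^ 2"
  shows "real ((2 * n choose k) ^ 2) / real n ^ k \<le> (9 / 16) ^ k"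
proof -
  have "1 \<le> k"
    using n k by (cases k) auto
  have k_real: "64 * real n \<le> real k ^ 2"
    using k by (metis of_nat_le_iff of_nat_mult of_nat_numeral of_nat_power)
  define b where "b = exp 1 * real (2 * n) / real k"
  have "real (2 * n choose k) \<le> b ^ k"
    unfolding b_def by (rule binomial_le_exp_pow[OF \<open>1 \<le> k\<close>])
  then have "real ((2 * n choose k) ^ 2) \<le> (b ^ k) ^ 2"
    unfolding of_nat_power by (rule power_mono) simp
  then have "real ((2 * n choose k) ^ 2) / real n ^ k \<le> (b ^ k) ^ 2 / real n ^ k"
    by (rule divide_right_mono) simp
  also have "\<dots> = (b ^ 2 / real n) ^ k"
    by (simp only: power_divide flip: power_mult) (simp only: mult.commute)
  also have "\<dots> \<le> (9 / 16) ^ k"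
  proof (rule power_mono)
    have "exp 1 ^ 2 \<le> (3 :: real) ^ 2"
      using exp_le by (intro power_mono) simp_all
    then have "4 * exp 1 ^ 2 * real n \<le> 4 * 9 * real n"
      by (intro mult_right_mono) simp_all
    also have "\<dots> \<le> 9 / 16 * real k ^ 2"
      using k_real by simp
    finally have "4 * exp 1 ^ 2 * real n \<le> 9 / 16 * real k ^ 2" .
    moreover have "b ^ 2 / real n = 4 * exp 1 ^ 2 * real n / real k ^ 2"
      using n by (simp add: b_def power_divide power_mult_distrib power2_eq_square)
    ultimately show "b ^ 2 / real n \<le> 9 / 16"
      using \<open>1 \<le> k\<close> by (simp add: divide_le_eq)
  qed simp
  finally show ?thesis .
qed

text \<open>The factor \<open>8\<close> makes the base \<open>4 e\<^sup>2 n / k\<^sup>2\<close> of \<open>binomial_sq_div_pow_le\<close> at most \<open>9/16\<close>.\<close>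
definition clique_threshold :: "nat \<Rightarrow> nat" where
  "clique_threshold n = nat \<lceil>8 * sqrt (real n)\<rceil>"

lemma clique_threshold_ge: "8 * sqrt (real n) \<le> real (clique_threshold n)"
  unfolding clique_threshold_def by linarith

lemma less_clique_threshold: "j < clique_threshold n \<Longrightarrow> real j < 8 * sqrt (real n)"
  unfolding clique_threshold_def by linarith

lemma clique_threshold_large:
  assumes "400 \<le> n"
  shows "1 \<le> clique_threshold n" "2 * clique_threshold n \<le> n + 1" "64 * n \<le> clique_threshold n ^ 2"
proof -
  define s where "s = sqrt (real n)"
  define t where "t = clique_threshold n"
  have s_sq: "s * s = real n"
    unfolding s_def by simp
  have "20 \<le> s"
    unfolding s_def using assms real_sqrt_le_mono[of "20\<^sup>2" "real n"] by simp
  then have "20 * s \<le> s * s"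
    by (intro mult_right_mono) simp_all
  have t: "8 * s \<le> real t" "real t \<le> 8 * s + 1"
    unfolding s_def t_def clique_threshold_def
    using of_int_ceiling_le_add_one[of "8 * sqrt (real n)"] by simp_all
  have "real 1 \<le> real t"
    using t \<open>20 \<le> s\<close> by simp
  moreover have "real (2 * t) \<le> real (n + 1)"
    using t s_sq \<open>20 \<le> s\<close> \<open>20 * s \<le> s * s\<close> by simp
  moreover have "real (64 * n) \<le> real (t ^ 2)"
    using mult_mono[OF t(1) t(1)] \<open>20 \<le> s\<close> s_sq by (simp add: power2_eq_square)
  ultimately show "1 \<le> clique_threshold n" "2 * clique_threshold n \<le> n + 1"
    "64 * n \<le> clique_threshold n ^ 2"
    unfolding t_def by (simp_all only: of_nat_le_iff)
qed

lemma filterlim_clique_threshold: "filterlim clique_threshold at_top sequentially"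
  unfolding filterlim_at_top
proof
  fix m :: nat
  have "real m \<le> real (clique_threshold n)" if "m * m \<le> n" for n
  proof -
    have "real m \<le> sqrt (real n)"
      using that by (metis of_nat_le_iff of_nat_mult real_le_rsqrt power2_eq_square)
    then show ?thesis
      using clique_threshold_ge[of n] by simp
  qed
  then show "\<forall>\<^sub>F n in sequentially. m \<le> clique_threshold n"
    by (intro eventually_sequentiallyI[of "m * m"]) simp
qed

lemma prob_z_ge_clique_threshold_tendsto_0:
  assumes P: "P \<in> {P1, P2, P_nested}"
  shows "(\<lambda>n. measure_pmf.prob (RM n) {M. clique_threshold n \<le> z P M}) \<longlonglongrightarrow> 0"
proof (rule Lim_null_comparison)
  have "measure_pmf.prob (RM n) {M. clique_threshold n \<le> z P M} \<le> (9 / 16) ^ clique_threshold n"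
    if "400 \<le> n" for n
  proof -
    note thr = clique_threshold_large[OF that]
    have "measure_pmf.prob (RM n) {M. clique_threshold n \<le> z P M}
        \<le> real ((2 * n choose clique_threshold n) ^ 2) / real n ^ clique_threshold n"
      using prob_z_ge_le[OF P thr(1,2)] .
    also have "\<dots> \<le> (9 / 16) ^ clique_threshold n"
      using binomial_sq_div_pow_le thr(3) that by simp
    finally show ?thesis .
  qed
  then show "\<forall>\<^sub>F n in sequentially.
      norm (measure_pmf.prob (RM n) {M. clique_threshold n \<le> z P M}) \<le> (9 / 16) ^ clique_threshold n"
    by (intro eventually_sequentiallyI[of 400]) simp
  show "(\<lambda>n. (9 / 16 :: real) ^ clique_threshold n) \<longlonglongrightarrow> 0"
    by (rule filterlim_compose[OF LIMSEQ_realpow_zero filterlim_clique_threshold]) simp_all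
qed

lemma prob_tendsto_1_if_z_small:
  assumes X: "X1 \<in> {P1, P2, P_nested}" "X2 \<in> {P1, P2, P_nested}"
    and good: "\<And>n M. 1 \<le> n \<Longrightarrow> M \<in> matchings n \<Longrightarrow>
      z X1 M < clique_threshold n \<Longrightarrow> z X2 M < clique_threshold n \<Longrightarrow> M \<in> G n"
  shows "(\<lambda>n. measure_pmf.prob (RM n) (G n)) \<longlonglongrightarrow> 1"
proof -
  define bad where "bad X n = measure_pmf.prob (RM n) {M. clique_threshold n \<le> z X M}" for X n
  have "1 - bad X1 n - bad X2 n \<le> measure_pmf.prob (RM n) (G n)" if "1 \<le> n" for n
  proof -
    let ?B = "\<lambda>X. {M. clique_threshold n \<le> z X M}"
    have "set_pmf (RM n) = matchings n"
      using card_matchings[of n] odd_double_fact_pos[of n] finite_matchings[of n]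
      unfolding RM_def by (intro set_pmf_of_set) auto
    then have "AE M in RM n. M \<in> UNIV \<longrightarrow> M \<in> G n \<union> (?B X1 \<union> ?B X2)"
      using good[OF that] by (auto simp: AE_measure_pmf_iff) (meson not_le)
    then have "measure_pmf.prob (RM n) UNIV \<le> measure_pmf.prob (RM n) (G n \<union> (?B X1 \<union> ?B X2))"
      by (intro measure_pmf.finite_measure_mono_AE) simp_all
    also have "\<dots> \<le> measure_pmf.prob (RM n) (G n) + measure_pmf.prob (RM n) (?B X1 \<union> ?B X2)"
      by (rule measure_subadditive) simp_all
    also have "\<dots> \<le> measure_pmf.prob (RM n) (G n) + (bad X1 n + bad X2 n)"
      unfolding bad_def by (intro add_left_mono measure_subadditive) simp_all
    finally show ?thesis
      using measure_pmf.prob_space[of "RM n"] by simp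
  qed
  then have lower: "\<forall>\<^sub>F n in sequentially. 1 - bad X1 n - bad X2 n \<le> measure_pmf.prob (RM n) (G n)"
    by (rule eventually_sequentiallyI)
  have upper: "\<forall>\<^sub>F n in sequentially. measure_pmf.prob (RM n) (G n) \<le> 1"
    by (simp add: measure_pmf.prob_le_1)
  have "(\<lambda>n. 1 - bad X1 n - bad X2 n) \<longlonglongrightarrow> 1 - 0 - 0"
    unfolding bad_def
    by (intro tendsto_diff tendsto_const prob_z_ge_clique_threshold_tendsto_0 X)
  then show ?thesis
    using tendsto_sandwich[OF lower upper] by simp
qed

lemma sqrt_le_of_le_mult:
  assumes "n \<le> a * b" "real b < 8 * sqrt (real n)" "1 \<le> n"
  shows "1 / 8 * sqrt (real n) \<le> real a"
proof -
  define s where "s = sqrt (real n)"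
  have "0 < s"
    unfolding s_def using assms(3) by simp
  have "s * s = real n"
    unfolding s_def by simp
  also have "\<dots> \<le> real (a * b)"
    using assms(1) by (simp only: of_nat_le_iff)
  also have "\<dots> \<le> real a * (8 * s)"
    unfolding s_def of_nat_mult using assms(2) by (intro mult_left_mono) simp_all
  finally have "s * s \<le> (8 * real a) * s"
    by (simp only: mult_ac)
  then have "s \<le> 8 * real a"
    using \<open>0 < s\<close> by (rule mult_right_le_imp_le)
  then show ?thesis
    unfolding s_def by simp
qed

lemma z_P1_sqrt_bounds:
  assumes M: "M \<in> matchings n" and "1 \<le> n"
    and small: "z P1 M < clique_threshold n" "z P_nested M < clique_threshold n"
  shows "1 / 8 * sqrt (real n) \<le> real (z P1 M) \<and> real (z P1 M) \<le> 8 * sqrt (real n)"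
proof
  have "n \<le> z P1 M * z P_nested M"
    using card_matching_le_z_P1_mult_z_P_nested
      [OF matching_if_in_matchings[OF M] finite_if_in_matchings[OF M]]
    by (simp add: card_if_in_matchings[OF M])
  then show "1 / 8 * sqrt (real n) \<le> real (z P1 M)"
    using less_clique_threshold[OF small(2)] \<open>1 \<le> n\<close> by (rule sqrt_le_of_le_mult)
  show "real (z P1 M) \<le> 8 * sqrt (real n)"
    using less_clique_threshold[OF small(1)] by simp
qed

lemma z_P2_sqrt_bounds:
  assumes M: "M \<in> matchings n" and "1 \<le> n"
    and small: "z P2 M < clique_threshold n" "z P1 M < clique_threshold n"
  shows "1 / 8 * sqrt (real n) \<le> real (z P2 M) \<and> real (z P2 M) \<le> 8 * sqrt (real n)"
proof
  have "n \<le> z P_nested M * z P1 M"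
    using card_matching_le_z_P1_mult_z_P_nested
      [OF matching_if_in_matchings[OF M] finite_if_in_matchings[OF M]]
    by (simp add: card_if_in_matchings[OF M] mult.commute)
  then have "1 / 8 * sqrt (real n) \<le> real (z P_nested M)"
    using less_clique_threshold[OF small(2)] \<open>1 \<le> n\<close> by (rule sqrt_le_of_le_mult)
  also have "\<dots> \<le> real (z P2 M)"
    using z_mono[OF _ finite_if_in_matchings[OF M], of P_nested P2]
    by (simp only: of_nat_le_iff subset_insertI)
  finally show "1 / 8 * sqrt (real n) \<le> real (z P2 M)" .
  show "real (z P2 M) \<le> 8 * sqrt (real n)"
    using less_clique_threshold[OF small(1)] by simp
qed

theorem theorem1p1:
  shows "\<forall>P \<in> {{AABB, ABAB}, {AABB, ABBA}}. \<exists>c C :: real. 0 < c \<and> c < C \<and>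
    (\<lambda>n. measure_pmf.prob (RM n)
        {M. c * sqrt (real n) \<le> real (z P M) \<and> real (z P M) \<le> C * sqrt (real n)})
      \<longlonglongrightarrow> 1"
proof
  fix P assume "P \<in> {{AABB, ABAB}, {AABB, ABBA}}"
  then consider "P = P1" | "P = P2"
    by auto
  then have "(\<lambda>n. measure_pmf.prob (RM n)
      {M. 1 / 8 * sqrt (real n) \<le> real (z P M) \<and> real (z P M) \<le> 8 * sqrt (real n)}) \<longlonglongrightarrow> 1"
  proof cases
    case 1
    have "M \<in> {M. 1 / 8 * sqrt (real n) \<le> real (z P1 M) \<and> real (z P1 M) \<le> 8 * sqrt (real n)}"
      if "1 \<le> n" "M \<in> matchings n" "z P1 M < clique_threshold n" "z P_nested M < clique_threshold n"
      for n M
      using z_P1_sqrt_bounds[OF that(2,1,3,4)] by simp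
    then show ?thesis
      unfolding 1 by (rule prob_tendsto_1_if_z_small[rotated 2]) auto
  next
    case 2
    have "M \<in> {M. 1 / 8 * sqrt (real n) \<le> real (z P2 M) \<and> real (z P2 M) \<le> 8 * sqrt (real n)}"
      if "1 \<le> n" "M \<in> matchings n" "z P2 M < clique_threshold n" "z P1 M < clique_threshold n"
      for n M
      using z_P2_sqrt_bounds[OF that(2,1,3,4)] by simp
    then show ?thesis
      unfolding 2 by (rule prob_tendsto_1_if_z_small[rotated 2]) auto
  qed
  then show "\<exists>c C :: real. 0 < c \<and> c < C \<and>
      (\<lambda>n. measure_pmf.prob (RM n)
        {M. c * sqrt (real n) \<le> real (z P M) \<and> real (z P M) \<le> C * sqrt (real n)}) \<longlonglongrightarrow> 1"
    by (intro exI[of _ "1 / 8"] exI[of _ 8]) simp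
qed

end
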